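(* For the Pólya urn process on $H$ and any vertex $i\in[m]$, $\mathbb P\big[\lim_{n\to\infty}B_i(n)=\infty\big]=1$.
   Context: Let $H=(V,E)$ be a finite hypergraph with vertex set $V=[m]=\{1,\dots,m\}$ and a set $E$ of $N\ge 1$ hyperedges (nonempty subsets of $[m]$), such that every vertex belongs to at least one hyperedge. Pólya urn on $H$: initially vertex $i$ holds $B_i(0)\ge 1$ balls; $N_0=\sum_{i=1}^m B_i(0)$. At each step $n\ge 1$, for each hyperedge $I\in E$ (independently across hyperedges, conditionally on the past) one ball is added to a vertex $i\in I$ chosen with probability $B_i(n-1)/\sum_{j\in I}B_j(n-1)$, where $B_i(n)$ denotes the number of balls at vertex $i$ after step $n$. *)

theory Defs
  imports "HOL-Probability.Probability"
begin

definition hypergraph :: "nat \<Rightarrow> nat set set \<Rightarrow> bool" where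
  "hypergraph m E \<longleftrightarrow> finite E \<and> E \<noteq> {} \<and> (\<forall>I\<in>E. I \<noteq> {} \<and> I \<subseteq> {1..m})
     \<and> (\<forall>i\<in>{1..m}. \<exists>I\<in>E. i \<in> I)"

text \<open>X n I \<omega> is the vertex of hyperedge I receiving a ball at step n (n >= 1).
  urn_balls B0 E X n \<omega> i is B_i(n), the number of balls at vertex i after step n.\<close>
primrec urn_balls :: "(nat \<Rightarrow> nat) \<Rightarrow> nat set set \<Rightarrow> (nat \<Rightarrow> nat set \<Rightarrow> 'a \<Rightarrow> nat)
    \<Rightarrow> nat \<Rightarrow> 'a \<Rightarrow> nat \<Rightarrow> nat" where
  "urn_balls B0 E X 0 \<omega> = B0"
| "urn_balls B0 E X (Suc n) \<omega> =
     (\<lambda>i. urn_balls B0 E X n \<omega> i + card {I\<in>E. X (Suc n) I \<omega> = i})"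

text \<open>The Polya urn on H: conditionally on the whole history of the first n steps,
  the choices at step n+1 for the different hyperedges are independent, and hyperedge I
  sends its ball to vertex j \<in> I with probability B_j(n) / (sum over I of B(n)).\<close>
definition polya_urn_process ::
    "'a measure \<Rightarrow> nat \<Rightarrow> nat set set \<Rightarrow> (nat \<Rightarrow> nat) \<Rightarrow> (nat \<Rightarrow> nat set \<Rightarrow> 'a \<Rightarrow> nat) \<Rightarrow> bool" where
  "polya_urn_process M m E B0 X \<longleftrightarrow>
     prob_space M \<and> hypergraph m E \<and> (\<forall>i\<in>{1..m}. B0 i \<ge> 1) \<and>
     (\<forall>n I. X n I \<in> measurable M (count_space UNIV)) \<and>
     (\<forall>(n::nat) (h::nat \<Rightarrow> nat set \<Rightarrow> nat) (c::nat set \<Rightarrow> nat). (\<forall>I\<in>E. c I \<in> I) \<longrightarrow>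
        measure M {\<omega>\<in>space M. (\<forall>k\<in>{1..n}. \<forall>I\<in>E. X k I \<omega> = h k I)
                              \<and> (\<forall>I\<in>E. X (Suc n) I \<omega> = c I)}
        = (\<integral>\<omega>. indicator {\<omega>\<in>space M. \<forall>k\<in>{1..n}. \<forall>I\<in>E. X k I \<omega> = h k I} \<omega>
               * (\<Prod>I\<in>E. real (urn_balls B0 E X n \<omega> (c I))
                             / (\<Sum>j\<in>I. real (urn_balls B0 E X n \<omega> j))) \<partial>M))"

end

theory Submission
  imports Defs
begin

text \<open>Fix a vertex i and a hyperedge I containing it. Vertex i always holds at least one ball,
  while I holds at most the N_0 + n N balls present after n steps. So, whatever happened before,
  I sends its ball of step n + 1 to i with conditional probability at least 1 / (N_0 + n N).
  Hence i receives no ball from I during the steps n_0 + 1, ..., n_0 + L with probability at most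
  exp (- sum over k < L of 1 / (N_0 + (n_0 + k) N)), which tends to 0 by the divergence of the
  harmonic series. Thus almost surely B_i(n) is not constant from any time on, and being
  nondecreasing it tends to infinity.\<close>

lemma mono_nat_at_top_iff_never_constant:
  fixes u :: "nat \<Rightarrow> nat"
  assumes "mono u"
  shows "filterlim u at_top sequentially \<longleftrightarrow> (\<forall>n0. \<exists>k\<ge>n0. u k \<noteq> u n0)"
proof
  assume lim: "filterlim u at_top sequentially"
  show "\<forall>n0. \<exists>k\<ge>n0. u k \<noteq> u n0"
  proof
    fix n0
    from lim obtain N where "\<forall>k\<ge>N. Suc (u n0) \<le> u k"
      by (auto simp: filterlim_at_top eventually_sequentially)
    then show "\<exists>k\<ge>n0. u k \<noteq> u n0"
      by (metis Suc_n_not_le_n max.cobounded1 max.cobounded2)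
  qed
next
  assume never_constant: "\<forall>n0. \<exists>k\<ge>n0. u k \<noteq> u n0"
  have "\<exists>N. Z \<le> u N" for Z
  proof (induction Z)
    case (Suc Z)
    then obtain N where "Z \<le> u N" by blast
    moreover obtain k where "k \<ge> N" "u k \<noteq> u N" using never_constant by blast
    ultimately have "Suc Z \<le> u k" using monoD[OF assms, of N k] by simp
    then show ?case by blast
  qed simp
  then show "filterlim u at_top sequentially"
    unfolding filterlim_at_top eventually_sequentially
    by (meson assms monoD order_trans)
qed

lemma sum_card_fibres_le:
  assumes "finite A" and "finite J"
  shows "(\<Sum>j\<in>J. card {x\<in>A. f x = j}) \<le> card A"
proof -
  have "(\<Sum>j\<in>J. card {x\<in>A. f x = j}) = card (\<Union>j\<in>J. {x\<in>A. f x = j})"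
    using assms by (intro card_UN_disjoint[symmetric]) auto
  also have "\<dots> \<le> card A"
    using assms(1) by (intro card_mono) auto
  finally show ?thesis .
qed

lemma sum_PiE_prod_marginal:
  fixes p :: "'a \<Rightarrow> 'b \<Rightarrow> 'c :: comm_semiring_1"
  assumes "finite A" and "a \<in> A" and "\<And>x. x \<in> A \<Longrightarrow> finite (S x)"
    and "\<And>x. x \<in> A \<Longrightarrow> x \<noteq> a \<Longrightarrow> (\<Sum>y\<in>S x. p x y) = 1"
  shows "(\<Sum>c\<in>PiE A (S(a := {b})). \<Prod>x\<in>A. p x (c x)) = p a b"
proof -
  have "(\<Sum>c\<in>PiE A (S(a := {b})). \<Prod>x\<in>A. p x (c x)) = (\<Prod>x\<in>A. \<Sum>y\<in>(S(a := {b})) x. p x y)"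
    using assms by (intro prod_sum_PiE[symmetric]) auto
  also have "\<dots> = (\<Prod>x\<in>A. if x = a then p a b else 1)"
    using assms by (intro prod.cong) auto
  also have "\<dots> = p a b"
    using assms by simp
  finally show ?thesis .
qed

lemma emeasure_UN_countable_mult_le:
  assumes "countable G" and "disjoint_family_on A G" and "disjoint_family_on B G"
    and "\<And>g. g \<in> G \<Longrightarrow> A g \<in> sets M" and "\<And>g. g \<in> G \<Longrightarrow> B g \<in> sets M"
    and "\<And>g. g \<in> G \<Longrightarrow> emeasure M (A g) * c \<le> emeasure M (B g)"
  shows "emeasure M (\<Union>g\<in>G. A g) * c \<le> emeasure M (\<Union>g\<in>G. B g)"
proof -
  have "emeasure M (\<Union>g\<in>G. A g) * c = (\<integral>\<^sup>+g. emeasure M (A g) * c \<partial>count_space G)"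
    using assms by (simp add: emeasure_UN_countable nn_integral_multc)
  also have "\<dots> \<le> (\<integral>\<^sup>+g. emeasure M (B g) \<partial>count_space G)"
    using assms by (intro nn_integral_mono) auto
  also have "\<dots> = emeasure M (\<Union>g\<in>G. B g)"
    using assms by (simp add: emeasure_UN_countable)
  finally show ?thesis .
qed

lemma sum_inverse_at_top_if_linear_bound:
  fixes d :: "nat \<Rightarrow> real"
  assumes "C > 0" and "\<And>k. 0 < d k" and "\<And>k. d k \<le> C * real (Suc k)"
  shows "filterlim (\<lambda>L. \<Sum>k<L. 1 / d k) at_top sequentially"
proof (rule filterlim_at_top_mono)
  show "filterlim (\<lambda>L. 1 / C * harm L) at_top sequentially"
    using \<open>C > 0\<close> by (intro filterlim_tendsto_pos_mult_at_top[OF tendsto_const _ harm_at_top]) auto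
  have "1 / C * harm L \<le> (\<Sum>k<L. 1 / d k)" for L
  proof -
    have "1 / C * harm L = (\<Sum>k<L. 1 / (C * real (Suc k)))"
      by (simp add: harm_altdef sum_distrib_left field_simps)
    also have "\<dots> \<le> (\<Sum>k<L. 1 / d k)"
      using assms by (intro sum_mono divide_left_mono) auto
    finally show ?thesis .
  qed
  then show "\<forall>\<^sub>F L in sequentially. 1 / C * harm L \<le> (\<Sum>k<L. 1 / d k)"
    by simp
qed

lemma urn_balls_ge_initial: "B0 j \<le> urn_balls B0 E X n \<omega> j"
  by (induction n) (auto intro: le_trans)

lemma mono_urn_balls: "mono (\<lambda>n. urn_balls B0 E X n \<omega> j)"
  unfolding mono_iff_le_Suc by simp

lemma urn_balls_Suc_gt:
  assumes "finite E" and "I \<in> E" and "X (Suc n) I \<omega> = j"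
  shows "urn_balls B0 E X n \<omega> j < urn_balls B0 E X (Suc n) \<omega> j"
proof -
  have "{I'\<in>E. X (Suc n) I' \<omega> = j} \<noteq> {}" using assms by blast
  then show ?thesis using assms(1) by (simp add: card_gt_0_iff)
qed

lemma sum_urn_balls_le:
  assumes "finite E" and "finite J"
  shows "(\<Sum>j\<in>J. urn_balls B0 E X n \<omega> j) \<le> (\<Sum>j\<in>J. B0 j) + n * card E"
proof (induction n)
  case (Suc n)
  have "(\<Sum>j\<in>J. urn_balls B0 E X (Suc n) \<omega> j)
      = (\<Sum>j\<in>J. urn_balls B0 E X n \<omega> j) + (\<Sum>j\<in>J. card {I\<in>E. X (Suc n) I \<omega> = j})"
    by (simp add: sum.distrib)
  also have "\<dots> \<le> (\<Sum>j\<in>J. B0 j) + n * card E + card E"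
    using Suc sum_card_fibres_le[OF assms] by (intro add_mono) auto
  finally show ?case by simp
qed simp

text \<open>It ranges over the countable set of
  nat-valued extensional functions on {1..n} \<times> E, so an event determined by the first n steps
  is a countable disjoint union of cylinders {history = g}, to each of which the transition
  law applies.\<close>
definition history :: "(nat \<Rightarrow> nat set \<Rightarrow> 'a \<Rightarrow> nat) \<Rightarrow> nat set set \<Rightarrow> nat \<Rightarrow> 'a \<Rightarrow> nat \<times> nat set \<Rightarrow> nat"
  where "history X E n \<omega> = restrict (\<lambda>(k, I). X k I \<omega>) ({1..n} \<times> E)"

lemma history_in_PiE: "history X E n \<omega> \<in> ({1..n} \<times> E) \<rightarrow>\<^sub>E UNIV"
  by (simp add: history_def)

lemma history_eq_iff:
  assumes "g \<in> ({1..n} \<times> E) \<rightarrow>\<^sub>E UNIV"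
  shows "history X E n \<omega> = g \<longleftrightarrow> (\<forall>k\<in>{1..n}. \<forall>I\<in>E. X k I \<omega> = g (k, I))"
  using assms by (auto simp: history_def fun_eq_iff PiE_def extensional_def)

locale polya_urn =
  fixes M :: "'a measure" and m :: nat and E :: "nat set set" and B0 :: "nat \<Rightarrow> nat"
    and X :: "nat \<Rightarrow> nat set \<Rightarrow> 'a \<Rightarrow> nat"
  assumes polya_urn_process: "polya_urn_process M m E B0 X"
begin

sublocale prob_space M
  using polya_urn_process by (simp add: polya_urn_process_def)

abbreviation balls :: "nat \<Rightarrow> 'a \<Rightarrow> nat \<Rightarrow> nat"
  where "balls n \<omega> j \<equiv> urn_balls B0 E X n \<omega> j"

lemma finite_edges: "finite E"
  using polya_urn_process by (simp add: polya_urn_process_def hypergraph_def)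

lemma edge_subset: "I \<in> E \<Longrightarrow> I \<subseteq> {1..m}"
  using polya_urn_process by (simp add: polya_urn_process_def hypergraph_def)

lemma finite_edge: "I \<in> E \<Longrightarrow> finite I"
  using edge_subset finite_subset by blast

lemma edge_nonempty: "I \<in> E \<Longrightarrow> I \<noteq> {}"
  using polya_urn_process by (simp add: polya_urn_process_def hypergraph_def)

lemma edges_nonempty: "E \<noteq> {}"
  using polya_urn_process by (simp add: polya_urn_process_def hypergraph_def)

lemma vertex_in_edge: "i \<in> {1..m} \<Longrightarrow> \<exists>I\<in>E. i \<in> I"
  using polya_urn_process by (simp add: polya_urn_process_def hypergraph_def)

lemma initial_balls_ge_1: "j \<in> {1..m} \<Longrightarrow> 1 \<le> B0 j"
  using polya_urn_process by (simp add: polya_urn_process_def)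

lemma measurable_choice [measurable]: "X n I \<in> measurable M (count_space UNIV)"
  using polya_urn_process by (simp add: polya_urn_process_def)

lemma measurable_balls [measurable]: "(\<lambda>\<omega>. balls n \<omega> j) \<in> measurable M (count_space UNIV)"
proof (induction n)
  case (Suc n)
  have "(\<lambda>\<omega>. balls (Suc n) \<omega> j) = (\<lambda>\<omega>. balls n \<omega> j + (\<Sum>I\<in>E. of_bool (X (Suc n) I \<omega> = j)))"
    using finite_edges by (simp add: Int_def conj_commute)
  then show ?case
    using Suc by (simp only:) measurable
qed simp

lemma pred_balls_eq [measurable]: "Measurable.pred M (\<lambda>\<omega>. balls k \<omega> j = balls n \<omega> j)"
proof -
  have "(\<lambda>\<omega>. balls k \<omega> j = balls n \<omega> j) = (\<lambda>\<omega>. \<exists>v. balls k \<omega> j = v \<and> balls n \<omega> j = v)"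
    by auto
  then show ?thesis
    by (simp only:) measurable
qed

lemma balls_ge_1: "j \<in> {1..m} \<Longrightarrow> 1 \<le> balls n \<omega> j"
  using initial_balls_ge_1 urn_balls_ge_initial[of B0 j] order_trans by metis

definition total_balls :: "nat \<Rightarrow> real"
  where "total_balls n = real ((\<Sum>j\<in>{1..m}. B0 j) + n * card E)"

lemma total_balls_ge_1: "1 \<le> total_balls n"
proof -
  obtain I j where "I \<in> E" "j \<in> I"
    using edges_nonempty edge_nonempty by blast
  then have "j \<in> {1..m}" using edge_subset by blast
  then have "1 \<le> (\<Sum>j\<in>{1..m}. B0 j)"
    using initial_balls_ge_1 member_le_sum[of j "{1..m}" B0] by fastforce
  then show ?thesis unfolding total_balls_def by linarith
qed

lemma total_balls_le_linear: "total_balls (n0 + k) \<le> total_balls (Suc n0) * real (Suc k)"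
proof -
  have "(n0 + k) * card E \<le> Suc n0 * Suc k * card E"
    by (intro mult_right_mono) auto
  then have "(\<Sum>j\<in>{1..m}. B0 j) + (n0 + k) * card E \<le> ((\<Sum>j\<in>{1..m}. B0 j) + Suc n0 * card E) * Suc k"
    by (simp add: algebra_simps)
  then show ?thesis
    unfolding total_balls_def of_nat_mult[symmetric] by (rule of_nat_mono)
qed

lemma sum_balls_edge_le_total: "I \<in> E \<Longrightarrow> (\<Sum>j\<in>I. real (balls n \<omega> j)) \<le> total_balls n"
proof -
  assume "I \<in> E"
  have "(\<Sum>j\<in>I. balls n \<omega> j) \<le> (\<Sum>j\<in>I. B0 j) + n * card E"
    using \<open>I \<in> E\<close> finite_edges finite_edge by (intro sum_urn_balls_le) auto
  also have "\<dots> \<le> (\<Sum>j\<in>{1..m}. B0 j) + n * card E"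
    using \<open>I \<in> E\<close> edge_subset by (simp add: sum_mono2)
  finally show ?thesis
    unfolding total_balls_def of_nat_sum[symmetric] by (rule of_nat_mono)
qed

definition pick_prob :: "nat \<Rightarrow> 'a \<Rightarrow> nat set \<Rightarrow> nat \<Rightarrow> real"
  where "pick_prob n \<omega> I j = real (balls n \<omega> j) / (\<Sum>j'\<in>I. real (balls n \<omega> j'))"

lemma measurable_pick_prob [measurable]: "(\<lambda>\<omega>. pick_prob n \<omega> I j) \<in> borel_measurable M"
  unfolding pick_prob_def by measurable

lemma edge_balls_ge:
  assumes "I \<in> E" and "j \<in> I"
  shows "1 \<le> real (balls n \<omega> j)" and "real (balls n \<omega> j) \<le> (\<Sum>j'\<in>I. real (balls n \<omega> j'))"
proof -
  show "1 \<le> real (balls n \<omega> j)"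
    using assms edge_subset balls_ge_1 by fastforce
  show "real (balls n \<omega> j) \<le> (\<Sum>j'\<in>I. real (balls n \<omega> j'))"
    using assms finite_edge by (intro member_le_sum) auto
qed

lemma pick_prob_bounds:
  assumes "I \<in> E" and "j \<in> I"
  shows "0 \<le> pick_prob n \<omega> I j" and "pick_prob n \<omega> I j \<le> 1"
proof -
  note ge = edge_balls_ge[OF assms, of n \<omega>]
  show "0 \<le> pick_prob n \<omega> I j"
    unfolding pick_prob_def using ge by (intro divide_nonneg_nonneg) auto
  show "pick_prob n \<omega> I j \<le> 1"
    unfolding pick_prob_def using ge by (subst divide_le_eq_1_pos) auto
qed

lemma sum_pick_prob:
  assumes "I \<in> E"
  shows "(\<Sum>j\<in>I. pick_prob n \<omega> I j) = 1"
proof -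
  obtain j where "j \<in> I" using edge_nonempty[OF assms] by blast
  then have "(\<Sum>j'\<in>I. real (balls n \<omega> j')) \<noteq> 0"
    using edge_balls_ge[OF assms, of j n \<omega>] by linarith
  then show ?thesis
    by (simp add: pick_prob_def sum_divide_distrib[symmetric])
qed

text \<open>Vertex i holds at least one ball, and the hyperedge at most total_balls n.\<close>
lemma pick_prob_ge:
  assumes "I \<in> E" and "i \<in> I"
  shows "1 / total_balls n \<le> pick_prob n \<omega> I i"
proof -
  note ge = edge_balls_ge[OF assms, of n \<omega>]
  have "1 / total_balls n \<le> 1 / (\<Sum>j\<in>I. real (balls n \<omega> j))"
    using ge sum_balls_edge_le_total[OF assms(1)] total_balls_ge_1[of n]
    by (intro divide_left_mono) auto
  also have "\<dots> \<le> pick_prob n \<omega> I i"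
    using ge unfolding pick_prob_def by (intro divide_right_mono) auto
  finally show ?thesis .
qed

lemma transition_law:
  assumes "\<forall>I\<in>E. c I \<in> I"
  shows "prob {\<omega>\<in>space M. (\<forall>k\<in>{1..n}. \<forall>I\<in>E. X k I \<omega> = h k I) \<and> (\<forall>I\<in>E. X (Suc n) I \<omega> = c I)}
    = (\<integral>\<omega>. indicator {\<omega>\<in>space M. \<forall>k\<in>{1..n}. \<forall>I\<in>E. X k I \<omega> = h k I} \<omega>
          * (\<Prod>I\<in>E. pick_prob n \<omega> I (c I)) \<partial>M)"
  using polya_urn_process assms unfolding polya_urn_process_def pick_prob_def by blast

lemma prob_history_and_step:
  assumes "g \<in> ({1..n} \<times> E) \<rightarrow>\<^sub>E UNIV" and "\<forall>I\<in>E. c I \<in> I"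
  shows "prob {\<omega>\<in>space M. history X E n \<omega> = g \<and> (\<forall>I\<in>E. X (Suc n) I \<omega> = c I)}
    = (\<integral>\<omega>. indicator {\<omega>\<in>space M. history X E n \<omega> = g} \<omega> * (\<Prod>I\<in>E. pick_prob n \<omega> I (c I)) \<partial>M)"
  using transition_law[OF assms(2), of n "\<lambda>k I. g (k, I)"] by (simp only: history_eq_iff[OF assms(1)])

lemma sets_history_eq [measurable]:
  "g \<in> ({1..n} \<times> E) \<rightarrow>\<^sub>E UNIV \<Longrightarrow> {\<omega>\<in>space M. history X E n \<omega> = g} \<in> sets M"
  using finite_edges by (simp add: history_eq_iff)

text \<open>Sum the transition law over the choice vectors c with c I = i: the factors of the
  other hyperedges add up to 1.\<close>
lemma prob_step_hit_ge_on_history: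
  assumes g: "g \<in> ({1..n} \<times> E) \<rightarrow>\<^sub>E UNIV" and I: "I \<in> E" "i \<in> I"
  shows "prob {\<omega>\<in>space M. history X E n \<omega> = g} / total_balls n
    \<le> prob {\<omega>\<in>space M. history X E n \<omega> = g \<and> X (Suc n) I \<omega> = i}"
proof -
  define H where "H = {\<omega>\<in>space M. history X E n \<omega> = g}"
  define C where "C = PiE E ((\<lambda>J. J)(I := {i}))"
  define step where "step c = {\<omega>\<in>space M. history X E n \<omega> = g \<and> (\<forall>J\<in>E. X (Suc n) J \<omega> = c J)}" for c
  define f where "f \<omega> c = indicator H \<omega> * (\<Prod>J\<in>E. pick_prob n \<omega> J (c J))" for \<omega> c
  have H_sets [measurable]: "H \<in> sets M"
    using g by (simp add: H_def)
  have C_choice: "\<forall>J\<in>E. c J \<in> J" if "c \<in> C" for c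
    using that I by (auto simp: C_def PiE_def Pi_def split: if_splits)
  have C_at_I: "c I = i" if "c \<in> C" for c
    using that I by (auto simp: C_def PiE_def Pi_def)
  have "finite C"
    unfolding C_def using finite_edges finite_edge by (intro finite_PiE) auto
  have f_bounds: "0 \<le> f \<omega> c \<and> f \<omega> c \<le> 1" if "c \<in> C" for \<omega> c
    using pick_prob_bounds C_choice[OF that] unfolding f_def
    by (auto simp: indicator_def intro!: prod_nonneg prod_le_1)
  have f_integrable: "integrable M (\<lambda>\<omega>. f \<omega> c)" if "c \<in> C" for c
  proof (rule integrable_const_bound[where B = 1])
    show "AE \<omega> in M. norm (f \<omega> c) \<le> 1"
      using f_bounds[OF that] by simp
    show "(\<lambda>\<omega>. f \<omega> c) \<in> borel_measurable M"
      unfolding f_def by measurable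
  qed
  have marginal: "indicator H \<omega> * pick_prob n \<omega> I i = (\<Sum>c\<in>C. f \<omega> c)" for \<omega>
    unfolding f_def C_def sum_distrib_left[symmetric]
    using I finite_edges finite_edge sum_pick_prob by (subst sum_PiE_prod_marginal) auto
  have "prob H / total_balls n = (\<integral>\<omega>. indicator H \<omega> * (1 / total_balls n) \<partial>M)"
    by simp
  also have "\<dots> \<le> (\<integral>\<omega>. indicator H \<omega> * pick_prob n \<omega> I i \<partial>M)"
  proof (rule integral_mono)
    show "integrable M (\<lambda>\<omega>. indicator H \<omega> * (1 / total_balls n))"
      by (intro integrable_mult_left integrable_real_indicator) (auto simp: less_top[symmetric])
    show "integrable M (\<lambda>\<omega>. indicator H \<omega> * pick_prob n \<omega> I i)"
      unfolding marginal using f_integrable by auto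
  qed (use pick_prob_ge[OF I] in \<open>auto simp: indicator_def\<close>)
  also have "\<dots> = (\<integral>\<omega>. (\<Sum>c\<in>C. f \<omega> c) \<partial>M)"
    by (simp only: marginal)
  also have "\<dots> = (\<Sum>c\<in>C. \<integral>\<omega>. f \<omega> c \<partial>M)"
    using f_integrable by (simp add: integral_sum)
  also have "\<dots> = (\<Sum>c\<in>C. prob (step c))"
    using g C_choice by (simp add: f_def H_def step_def prob_history_and_step)
  also have "\<dots> = prob (\<Union>c\<in>C. step c)"
  proof (rule finite_measure_finite_Union[symmetric])
    show "disjoint_family_on step C"
      unfolding disjoint_family_on_def step_def C_def by (auto simp: PiE_ext)
  qed (use \<open>finite C\<close> g finite_edges in \<open>auto simp: step_def\<close>)
  also have "\<dots> \<le> prob {\<omega>\<in>space M. history X E n \<omega> = g \<and> X (Suc n) I \<omega> = i}"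
    using g I C_at_I by (intro finite_measure_mono) (auto simp: step_def)
  finally show ?thesis
    unfolding H_def .
qed

lemma prob_step_hit_ge:
  assumes "I \<in> E" and "i \<in> I"
  shows "prob {\<omega>\<in>space M. P (history X E n \<omega>)} / total_balls n
    \<le> prob {\<omega>\<in>space M. P (history X E n \<omega>) \<and> X (Suc n) I \<omega> = i}"
proof -
  define G where "G = {g \<in> ({1..n} \<times> E) \<rightarrow>\<^sub>E (UNIV :: nat set). P g}"
  define H where "H g = {\<omega>\<in>space M. history X E n \<omega> = g}" for g
  define Hit where "Hit g = {\<omega>\<in>space M. history X E n \<omega> = g \<and> X (Suc n) I \<omega> = i}" for g
  have "countable (({1..n} \<times> E) \<rightarrow>\<^sub>E (UNIV :: nat set))"
    using finite_edges by (intro countable_PiE) auto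
  then have "countable G"
    unfolding G_def by (rule countable_subset[rotated]) auto
  have H_sets: "H g \<in> sets M" and Hit_sets: "Hit g \<in> sets M" if "g \<in> G" for g
    using that by (auto simp: G_def H_def Hit_def)
  have unions: "{\<omega>\<in>space M. P (history X E n \<omega>)} = (\<Union>g\<in>G. H g)"
    "{\<omega>\<in>space M. P (history X E n \<omega>) \<and> X (Suc n) I \<omega> = i} = (\<Union>g\<in>G. Hit g)"
    using history_in_PiE[of X E n] unfolding G_def H_def Hit_def by blast+
  have "emeasure M (\<Union>g\<in>G. H g) * ennreal (1 / total_balls n) \<le> emeasure M (\<Union>g\<in>G. Hit g)"
  proof (rule emeasure_UN_countable_mult_le)
    show "disjoint_family_on H G" "disjoint_family_on Hit G"
      unfolding disjoint_family_on_def H_def Hit_def by auto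
    fix g assume "g \<in> G"
    then have "prob (H g) / total_balls n \<le> prob (Hit g)"
      unfolding H_def Hit_def G_def using prob_step_hit_ge_on_history assms by blast
    then show "emeasure M (H g) * ennreal (1 / total_balls n) \<le> emeasure M (Hit g)"
      using total_balls_ge_1[of n] by (simp add: emeasure_eq_measure ennreal_mult''[symmetric])
  qed (use \<open>countable G\<close> H_sets Hit_sets in auto)
  then show ?thesis
    using total_balls_ge_1[of n] unfolding unions
    by (simp add: emeasure_eq_measure ennreal_mult''[symmetric])
qed

lemma prob_no_hit_le_exp:
  assumes "I \<in> E" and "i \<in> I"
  shows "prob {\<omega>\<in>space M. \<forall>k\<in>{n0<..n0 + L}. X k I \<omega> \<noteq> i}
    \<le> exp (- (\<Sum>k<L. 1 / total_balls (n0 + k)))"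
proof (induction L)
  case (Suc L)
  define n where "n = n0 + L"
  define P where "P g \<longleftrightarrow> (\<forall>k\<in>{n0<..n}. g (k, I) \<noteq> i)" for g :: "nat \<times> nat set \<Rightarrow> nat"
  define Miss where "Miss = {\<omega>\<in>space M. \<forall>k\<in>{n0<..n}. X k I \<omega> \<noteq> i}"
  define Hit where "Hit = {\<omega>\<in>space M. (\<forall>k\<in>{n0<..n}. X k I \<omega> \<noteq> i) \<and> X (Suc n) I \<omega> = i}"
  have "Miss = {\<omega>\<in>space M. P (history X E n \<omega>)}"
    "Hit = {\<omega>\<in>space M. P (history X E n \<omega>) \<and> X (Suc n) I \<omega> = i}"
    using assms(1) by (auto simp: Miss_def Hit_def P_def history_def)
  then have hit: "prob Miss / total_balls n \<le> prob Hit"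
    using prob_step_hit_ge[OF assms] by simp
  have miss_Suc: "{\<omega>\<in>space M. \<forall>k\<in>{n0<..n0 + Suc L}. X k I \<omega> \<noteq> i} = Miss - Hit"
  proof -
    have "{n0<..n0 + Suc L} = insert (Suc n) {n0<..n}"
      unfolding n_def by auto
    then show ?thesis
      unfolding Miss_def Hit_def by auto
  qed
  have "prob (Miss - Hit) = prob Miss - prob Hit"
    by (rule finite_measure_Diff) (auto simp: Miss_def Hit_def)
  also have "\<dots> \<le> prob Miss * (1 - 1 / total_balls n)"
    using hit by (simp add: algebra_simps)
  also have "\<dots> \<le> exp (- (\<Sum>k<L. 1 / total_balls (n0 + k))) * exp (- (1 / total_balls n))"
    using Suc.IH total_balls_ge_1[of n] exp_ge_add_one_self[of "- (1 / total_balls n)"]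
    by (intro mult_mono) (auto simp: Miss_def n_def)
  also have "\<dots> = exp (- (\<Sum>k<Suc L. 1 / total_balls (n0 + k)))"
    by (simp add: n_def exp_add[symmetric])
  finally show ?case
    unfolding miss_Suc .
qed simp

lemma prob_stuck_eq_0:
  assumes "i \<in> {1..m}"
  shows "prob {\<omega>\<in>space M. \<forall>k\<ge>n0. balls k \<omega> i = balls n0 \<omega> i} = 0"
proof -
  obtain I where I: "I \<in> E" "i \<in> I"
    using vertex_in_edge[OF assms] by blast
  define s where "s L = (\<Sum>k<L. 1 / total_balls (n0 + k))" for L
  have no_hit: "X k I \<omega> \<noteq> i" if stuck: "\<forall>k\<ge>n0. balls k \<omega> i = balls n0 \<omega> i" and "n0 < k" for \<omega> k
  proof
    assume hit: "X k I \<omega> = i"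
    obtain k' where "k = Suc k'" and "n0 \<le> k'"
      using \<open>n0 < k\<close> by (cases k) auto
    have "balls n0 \<omega> i \<le> balls k' \<omega> i"
      using monoD[OF mono_urn_balls \<open>n0 \<le> k'\<close>] .
    also have "\<dots> < balls k \<omega> i"
      using urn_balls_Suc_gt[of E I X k' \<omega> i B0, OF finite_edges I(1)] hit \<open>k = Suc k'\<close> by simp
    finally show False
      using stuck[rule_format, of k] \<open>n0 < k\<close> by simp
  qed
  have stuck_no_hit: "{\<omega>\<in>space M. \<forall>k\<ge>n0. balls k \<omega> i = balls n0 \<omega> i}
      \<subseteq> {\<omega>\<in>space M. \<forall>k\<in>{n0<..n0 + L}. X k I \<omega> \<noteq> i}" for L
    using no_hit by fastforce
  have bound: "prob {\<omega>\<in>space M. \<forall>k\<ge>n0. balls k \<omega> i = balls n0 \<omega> i} \<le> exp (- s L)" for L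
  proof -
    have "prob {\<omega>\<in>space M. \<forall>k\<ge>n0. balls k \<omega> i = balls n0 \<omega> i}
        \<le> prob {\<omega>\<in>space M. \<forall>k\<in>{n0<..n0 + L}. X k I \<omega> \<noteq> i}"
      by (rule finite_measure_mono[OF stuck_no_hit]) measurable
    also have "\<dots> \<le> exp (- s L)"
      unfolding s_def by (rule prob_no_hit_le_exp[OF I])
    finally show ?thesis .
  qed
  have "filterlim s at_top sequentially"
    unfolding s_def
  proof (rule sum_inverse_at_top_if_linear_bound)
    show "total_balls (n0 + k) \<le> total_balls (Suc n0) * real (Suc k)" for k
      by (rule total_balls_le_linear)
  qed (use total_balls_ge_1 less_le_trans[OF zero_less_one] in blast)+
  then have "filterlim (\<lambda>L. - s L) at_bot sequentially"
    by (simp add: filterlim_uminus_at_top)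
  then have "(\<lambda>L. exp (- s L)) \<longlonglongrightarrow> 0"
    by (rule filterlim_compose[OF exp_at_bot])
  then have "prob {\<omega>\<in>space M. \<forall>k\<ge>n0. balls k \<omega> i = balls n0 \<omega> i} \<le> 0"
    by (rule LIMSEQ_le_const) (use bound in blast)
  then show ?thesis
    using measure_nonneg by (rule antisym)
qed

end

theorem mainTheorem12:
  fixes M :: "'a measure" and m :: nat and E :: "nat set set" and B0 :: "nat \<Rightarrow> nat"
    and X :: "nat \<Rightarrow> nat set \<Rightarrow> 'a \<Rightarrow> nat" and i :: nat
  assumes "polya_urn_process M m E B0 X"
    and "i \<in> {1..m}"
  shows "measure M {\<omega>\<in>space M. filterlim (\<lambda>n. urn_balls B0 E X n \<omega> i) at_top sequentially} = 1"
proof -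
  interpret polya_urn M m E B0 X
    using assms(1) by unfold_locales
  have "AE \<omega> in M. \<not> (\<forall>k\<ge>n0. balls k \<omega> i = balls n0 \<omega> i)" for n0
  proof (rule prob_Collect_eq_0[THEN iffD1])
    show "{\<omega>\<in>space M. \<forall>k\<ge>n0. balls k \<omega> i = balls n0 \<omega> i} \<in> sets M"
      by measurable
  qed (rule prob_stuck_eq_0[OF assms(2)])
  then have "AE \<omega> in M. \<forall>n0. \<exists>k\<ge>n0. balls k \<omega> i \<noteq> balls n0 \<omega> i"
    by (simp add: AE_all_countable)
  moreover have "{\<omega>\<in>space M. \<forall>n0. \<exists>k\<ge>n0. balls k \<omega> i \<noteq> balls n0 \<omega> i} \<in> sets M"
    by measurable
  ultimately have "prob {\<omega>\<in>space M. \<forall>n0. \<exists>k\<ge>n0. balls k \<omega> i \<noteq> balls n0 \<omega> i} = 1"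
    by (simp add: prob_Collect_eq_1)
  then show ?thesis
    by (simp add: mono_nat_at_top_iff_never_constant[OF mono_urn_balls])
qed

end
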